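(* Consider, for $x\ge0$ and $a>0$, the planar system $$\dot x=1,\qquad \dot y=-ay-\sin\!\left[\pi x\left(1+\tfrac12\lambda\right)\right],$$ with $\lambda=\operatorname{sign}(y)$ for $y\ne0$ and $\lambda\in(-1,1)$ on $y=0$. This system does not have non-sliding periodic solutions.
   Context: For $y>0$ the system is $\dot y=-ay-\sin(3\pi x/2)$ and for $y<0$ it is $\dot y=-ay-\sin(\pi x/2)$. The sliding manifold is $\Lambda^N=\{(x,0):x\in(\frac{2n}{3},2n),\ n\ge1\}$, the set of points of $y=0$ where some $\lambda\in(-1,1)$ gives $\sin[\pi x(1+\lambda/2)]=0$; a solution may remain on $y=0$ (with $\dot x=1$) only while on $\Lambda^N$. A periodic solution is called sliding if part of it lies on $\Lambda^N$ (here: if at least one of its points lies on $\Lambda^N$), and non-sliding otherwise. *)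

theory Defs
  imports "HOL-Analysis.Analysis"
begin

definition rhs :: "real \<Rightarrow> real \<Rightarrow> real \<Rightarrow> real \<Rightarrow> real" where
  "rhs a x y l = - a * y - sin (pi * x * (1 + l / 2))"

text \<open>Since xdot = 1 we parametrise by x.\<close>
definition is_solution :: "real \<Rightarrow> real \<Rightarrow> (real \<Rightarrow> real) \<Rightarrow> bool" where
  "is_solution a x0 y \<longleftrightarrow> x0 \<ge> 0 \<and>
     (\<exists>lam :: real \<Rightarrow> real.
        (\<forall>s\<ge>x0. (y s \<noteq> 0 \<longrightarrow> lam s = sgn (y s)) \<and>
                  (y s = 0 \<longrightarrow> -1 < lam s \<and> lam s < 1)) \<and>
        (\<forall>x\<ge>x0. ((\<lambda>s. rhs a s (y s) (lam s)) has_integral (y x - y x0)) {x0..x}))"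

text \<open>Periodic solution: (x(t), y(t)) = (t + x0, y(t + x0)) with y periodic.\<close>
definition periodic_solution :: "real \<Rightarrow> real \<Rightarrow> (real \<Rightarrow> real) \<Rightarrow> bool" where
  "periodic_solution a x0 y \<longleftrightarrow> is_solution a x0 y \<and>
     (\<exists>T>0. \<forall>x\<ge>x0. y (x + T) = y x)"

text \<open>x-coordinates of the sliding manifold Lambda^N = {(x,0) : x in (2n/3, 2n), n >= 1}.\<close>
definition Lambda_N :: "real set" where
  "Lambda_N = {x. \<exists>n::nat. n \<ge> 1 \<and> 2 * real n / 3 < x \<and> x < 2 * real n}"

definition sliding :: "real \<Rightarrow> (real \<Rightarrow> real) \<Rightarrow> bool" where
  "sliding x0 y \<longleftrightarrow> (\<exists>x\<ge>x0. y x = 0 \<and> x \<in> Lambda_N)"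

end

theory Submission
  imports Defs
begin

text \<open>Every x \<ge> 1 lies in some (2n/3, 2n), so a non-sliding solution cannot vanish for x \<ge> 1.
  There it has a fixed sign \<sigma>, hence \<lambda> = \<sigma> and y solves the linear equation
  y' = -a y - sin(\<pi> x k) with k = 1 + \<sigma>/2. Integrating over n periods, the left-hand side
  vanishes by periodicity and the sine integral is bounded by 2/(\<pi> k), while \<sigma> times the
  integral of y grows linearly in n because \<sigma> y is bounded below by a positive constant.\<close>

lemma atLeast_one_subset_Lambda_N: "{1..} \<subseteq> Lambda_N"
proof
  fix x :: real
  assume "x \<in> {1..}"
  then have x: "x \<ge> 1" by simp
  define n where "n = nat \<lfloor>x\<rfloor>"
  have "real n = of_int \<lfloor>x\<rfloor>" using x unfolding n_def by simp
  moreover have "\<lfloor>x\<rfloor> \<ge> 1" using x by (simp add: le_floor_iff)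
  ultimately have "real n \<le> x" "x < real n + 1" "real n \<ge> 1" by linarith+
  then show "x \<in> Lambda_N" unfolding Lambda_N_def by (intro CollectI exI[of _ n]) auto
qed

lemma sin_integral_bounded:
  fixes k u X :: real
  assumes k: "k > 0" and uX: "u \<le> X"
  obtains I where "((\<lambda>s. sin (pi * s * k)) has_integral I) {u..X}" "\<bar>I\<bar> \<le> 2 / (pi * k)"
proof -
  let ?F = "\<lambda>s. - cos (pi * s * k) / (pi * k)"
  have "((\<lambda>s. sin (pi * s * k)) has_integral (?F X - ?F u)) {u..X}"
  proof (rule fundamental_theorem_of_calculus)
    show "(?F has_vector_derivative sin (pi * x * k)) (at x within {u..X})" for x
      using k unfolding has_vector_derivative_def
      by (intro derivative_eq_intros | force simp: field_simps)+
  qed (use uX in auto)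
  moreover have "\<bar>?F X - ?F u\<bar> \<le> 2 / (pi * k)"
  proof -
    have "\<bar>?F X - ?F u\<bar> = \<bar>cos (pi * u * k) - cos (pi * X * k)\<bar> / (pi * k)"
      using k by (simp add: field_simps abs_divide)
    also have "\<dots> \<le> 2 / (pi * k)"
    proof (rule divide_right_mono)
      show "\<bar>cos (pi * u * k) - cos (pi * X * k)\<bar> \<le> 2"
        using abs_cos_le_one[of "pi * u * k"] abs_cos_le_one[of "pi * X * k"]
        unfolding abs_le_iff by linarith
    qed (use k in simp)
    finally show ?thesis .
  qed
  ultimately show ?thesis using that by blast
qed

lemma periodic_shift_nat:
  fixes f :: "real \<Rightarrow> 'a"
  assumes per: "\<forall>x\<ge>x0. f (x + T) = f x" and "T \<ge> 0" and "x \<ge> x0"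
  shows "f (x + real j * T) = f x"
proof (induction j)
  case (Suc j)
  have "0 \<le> real j * T" using assms(2) by simp
  then have "x0 \<le> x + real j * T" using assms(3) by linarith
  then have "f (x + real j * T + T) = f (x + real j * T)" using per by blast
  then show ?case using Suc by (simp add: algebra_simps)
qed simp

lemma periodic_positive_bounded_below:
  fixes f :: "real \<Rightarrow> real"
  assumes T: "T > 0" and per: "\<forall>x\<ge>x0. f (x + T) = f x"
    and cont: "continuous_on {x0..x0+T} f" and pos: "\<And>s. s \<ge> x0 \<Longrightarrow> f s > 0"
  obtains c where "c > 0" "\<And>s. s \<ge> x0 \<Longrightarrow> c \<le> f s"
proof -
  obtain m where m: "m \<in> {x0..x0+T}" and min: "\<And>s. s \<in> {x0..x0+T} \<Longrightarrow> f m \<le> f s"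
    using continuous_attains_inf[OF compact_Icc _ cont] T by auto
  have "f m \<le> f s" if s: "s \<ge> x0" for s
  proof -
    define j where "j = nat \<lfloor>(s - x0) / T\<rfloor>"
    have "real j = of_int \<lfloor>(s - x0) / T\<rfloor>" using s T unfolding j_def by simp
    then have "real j \<le> (s - x0) / T" "(s - x0) / T < real j + 1" by linarith+
    then have "real j * T \<le> s - x0" "s - x0 < (real j + 1) * T"
      using T by (simp_all add: field_simps)
    then have r: "s - real j * T \<in> {x0..x0+T}" by (auto simp: algebra_simps)
    have "f s = f (s - real j * T)"
      using periodic_shift_nat[OF per, of "s - real j * T" j] r T by simp
    then show ?thesis using min[OF r] by simp
  qed
  then show ?thesis using that pos[of m] m by auto
qed

lemma continuous_on_of_has_integral_increment:
  fixes y g :: "real \<Rightarrow> real"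
  assumes int: "\<forall>x\<ge>x0. (g has_integral (y x - y x0)) {x0..x}"
  shows "continuous_on {x0..b} y"
proof (cases "x0 \<le> b")
  case True
  have "continuous_on {x0..b} (\<lambda>x. y x0 + integral {x0..x} g)"
    using int True by (intro continuous_intros indefinite_integral_continuous_1 has_integral_integrable) blast
  moreover have "y x0 + integral {x0..x} g = y x" if "x \<in> {x0..b}" for x
    using integral_unique[of g "y x - y x0" "{x0..x}"] int that by simp
  ultimately show ?thesis using continuous_on_cong by (metis (no_types, lifting))
qed simp

lemma is_solution_continuous_on:
  assumes "is_solution a x0 y"
  shows "continuous_on {x0..b} y"
  using assms continuous_on_of_has_integral_increment unfolding is_solution_def by blast

lemma has_integral_increment_shift:
  fixes y g :: "real \<Rightarrow> real"
  assumes int: "\<forall>x\<ge>x0. (g has_integral (y x - y x0)) {x0..x}" and "x0 \<le> x1" "x1 \<le> X"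
  shows "(g has_integral (y X - y x1)) {x1..X}"
proof -
  have "x0 \<le> X" using assms(2,3) by linarith
  then have gX: "g integrable_on {x0..X}" using int has_integral_integrable by blast
  have "integral {x0..x1} g + integral {x1..X} g = integral {x0..X} g"
    using Henstock_Kurzweil_Integration.integral_combine[OF assms(2,3) gX] .
  moreover have "integral {x0..x1} g = y x1 - y x0" "integral {x0..X} g = y X - y x0"
    using int assms(2) \<open>x0 \<le> X\<close> integral_unique by blast+
  ultimately have "integral {x1..X} g = y X - y x1" by simp
  moreover have "g integrable_on {x1..X}" using integrable_subinterval_real[OF gX] assms by auto
  ultimately show ?thesis using has_integral_integral by metis
qed

lemma nonvanishing_continuous_sgn_constant:
  fixes y :: "real \<Rightarrow> real"
  assumes cont: "\<And>b. continuous_on {x1..b} y" and nz: "\<And>s. s \<ge> x1 \<Longrightarrow> y s \<noteq> 0"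
    and s: "s \<ge> x1"
  shows "sgn (y s) = sgn (y x1)"
proof (rule ccontr)
  assume "sgn (y s) \<noteq> sgn (y x1)"
  then have "y x1 \<le> 0 \<and> 0 \<le> y s \<or> y s \<le> 0 \<and> 0 \<le> y x1"
    by (auto simp: sgn_if split: if_splits)
  then obtain z where "x1 \<le> z" "z \<le> s" "y z = 0"
    using IVT'[of y x1 0 s] IVT2'[of y s 0 x1] cont s by blast
  then show False using nz by simp
qed

lemma no_periodic_solution_of_fixed_sign:
  fixes a T k \<sigma> x1 :: real and y :: "real \<Rightarrow> real"
  assumes a: "a > 0" and T: "T > 0" and k: "k > 0" and \<sigma>: "\<bar>\<sigma>\<bar> = 1"
    and per: "\<forall>x\<ge>x1. y (x + T) = y x"
    and cont: "\<And>b. continuous_on {x1..b} y"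
    and pos: "\<And>s. s \<ge> x1 \<Longrightarrow> \<sigma> * y s > 0"
    and int: "\<And>X. X \<ge> x1 \<Longrightarrow>
      ((\<lambda>s. - a * y s - sin (pi * s * k)) has_integral (y X - y x1)) {x1..X}"
  shows False
proof -
  obtain c where c: "c > 0" and lower: "\<And>s. s \<ge> x1 \<Longrightarrow> c \<le> \<sigma> * y s"
  proof (rule periodic_positive_bounded_below[of T x1 "\<lambda>s. \<sigma> * y s"])
    show "\<forall>x\<ge>x1. \<sigma> * y (x + T) = \<sigma> * y x" using per by simp
  qed (use T pos continuous_on_mult_left[OF cont] in auto)
  define B where "B = 2 / (pi * k)"
  obtain n :: nat where n: "real n > B / (a * c * T)" using reals_Archimedean2 by blast
  define X where "X = x1 + real n * T"
  have X: "x1 \<le> X" using T unfolding X_def by simp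
  obtain I where I: "((\<lambda>s. sin (pi * s * k)) has_integral I) {x1..X}" "\<bar>I\<bar> \<le> B"
    using sin_integral_bounded[OF k X] unfolding B_def by blast
  define J where "J = integral {x1..X} y"
  have J: "(y has_integral J) {x1..X}"
    unfolding J_def by (intro integrable_integral integrable_continuous_interval cont)
  have "y X = y x1" using periodic_shift_nat[OF per, of x1 n] T unfolding X_def by simp
  then have "((\<lambda>s. - a * y s - sin (pi * s * k)) has_integral 0) {x1..X}" using int[OF X] by simp
  moreover have "((\<lambda>s. - a * y s - sin (pi * s * k)) has_integral (- a * J - I)) {x1..X}"
    by (intro has_integral_diff has_integral_mult_right J I(1))
  ultimately have "0 = - a * J - I" by (rule has_integral_unique)
  then have aJ: "a * J = - I" by simp
  have "(X - x1) * c \<le> \<sigma> * J"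
    using has_integral_le[OF has_integral_const_real[of c x1 X] has_integral_mult_right[OF J, where c=\<sigma>]]
      lower X by simp
  then have "a * ((X - x1) * c) \<le> \<sigma> * (a * J)"
    using mult_left_mono[of _ _ a] a by (simp add: mult.left_commute)
  also have "\<dots> \<le> \<bar>I\<bar>" using aJ \<sigma> abs_ge_minus_self[of "\<sigma> * I"] by (simp add: abs_mult)
  also have "\<dots> \<le> B" by (rule I(2))
  finally have "real n * (a * c * T) \<le> B" unfolding X_def by (simp add: algebra_simps)
  then show False using n a c T by (simp add: field_simps)
qed

lemma non_sliding_solution_fixed_sign:
  fixes a x0 x1 :: real and y :: "real \<Rightarrow> real"
  assumes sol: "is_solution a x0 y" and not_sliding: "\<not> sliding x0 y"
    and x01: "x0 \<le> x1" and x1: "1 \<le> x1"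
  obtains \<sigma> where "\<bar>\<sigma>\<bar> = 1" "\<And>s. s \<ge> x1 \<Longrightarrow> \<sigma> * y s > 0"
    "\<And>X. X \<ge> x1 \<Longrightarrow>
      ((\<lambda>s. - a * y s - sin (pi * s * (1 + \<sigma> / 2))) has_integral (y X - y x1)) {x1..X}"
proof -
  from sol obtain lam where lam: "\<forall>s\<ge>x0. y s \<noteq> 0 \<longrightarrow> lam s = sgn (y s)"
    and int: "\<forall>x\<ge>x0. ((\<lambda>s. rhs a s (y s) (lam s)) has_integral (y x - y x0)) {x0..x}"
    unfolding is_solution_def by blast
  define \<sigma> where "\<sigma> = sgn (y x1)"
  have nz: "y s \<noteq> 0" if "s \<ge> x1" for s
  proof
    assume "y s = 0"
    moreover have "s \<in> Lambda_N" using atLeast_one_subset_Lambda_N that x1 by auto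
    ultimately show False using not_sliding that x01 unfolding sliding_def by auto
  qed
  have cont: "continuous_on {x1..b} y" for b
    by (rule continuous_on_subset[OF is_solution_continuous_on[OF sol]]) (use x01 in auto)
  have sgn_y: "sgn (y s) = \<sigma>" if "s \<ge> x1" for s
    using nonvanishing_continuous_sgn_constant[OF cont nz that] unfolding \<sigma>_def .
  have "\<bar>\<sigma>\<bar> = 1" using nz[of x1] unfolding \<sigma>_def by (simp add: abs_sgn)
  moreover have "\<sigma> * y s > 0" if "s \<ge> x1" for s
  proof -
    have "\<sigma> * y s = \<bar>y s\<bar>" using sgn_y[OF that] abs_sgn[of "y s"] by (simp add: mult.commute)
    then show ?thesis using nz[OF that] by simp
  qed
  moreover have "((\<lambda>s. - a * y s - sin (pi * s * (1 + \<sigma> / 2))) has_integral (y X - y x1)) {x1..X}"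
    if X: "x1 \<le> X" for X
  proof (rule has_integral_eq[OF _ has_integral_increment_shift[OF int x01 X]])
    fix s assume "s \<in> {x1..X}"
    then have s: "x1 \<le> s" by simp
    then have "lam s = \<sigma>" using lam x01 nz[OF s] sgn_y[OF s] by auto
    then show "rhs a s (y s) (lam s) = - a * y s - sin (pi * s * (1 + \<sigma> / 2))"
      unfolding rhs_def by simp
  qed
  ultimately show ?thesis using that by blast
qed

theorem theorem3:
  fixes a x0 :: real and y :: "real \<Rightarrow> real"
  assumes "a > 0"
    and "periodic_solution a x0 y"
  shows "sliding x0 y"
proof (rule ccontr)
  assume not_sliding: "\<not> sliding x0 y"
  from assms(2) obtain T where sol: "is_solution a x0 y" and T: "T > 0"
    and per: "\<forall>x\<ge>x0. y (x + T) = y x"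
    unfolding periodic_solution_def by blast
  define x1 where "x1 = max x0 1"
  have x01: "x0 \<le> x1" and x1: "1 \<le> x1" unfolding x1_def by simp_all
  obtain \<sigma> where \<sigma>: "\<bar>\<sigma>\<bar> = 1" and pos: "\<And>s. s \<ge> x1 \<Longrightarrow> \<sigma> * y s > 0"
    and linear: "\<And>X. X \<ge> x1 \<Longrightarrow>
      ((\<lambda>s. - a * y s - sin (pi * s * (1 + \<sigma> / 2))) has_integral (y X - y x1)) {x1..X}"
    using non_sliding_solution_fixed_sign[OF sol not_sliding x01 x1] by blast
  have cont: "continuous_on {x1..b} y" for b
    by (rule continuous_on_subset[OF is_solution_continuous_on[OF sol]]) (use x01 in auto)
  have per1: "\<forall>x\<ge>x1. y (x + T) = y x" using per x01 by simp
  have "1 + \<sigma> / 2 > 0" using \<sigma> by (simp add: abs_if split: if_splits)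
  then show False
    using no_periodic_solution_of_fixed_sign[OF assms(1) T _ \<sigma> per1 cont pos linear] by blast
qed

end
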